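(* Let $(A_i,\omega_i)$, $i=1,2$, be baric algebras over $K$. Then $A_1\bowtie A_2$ is associative if and only if $xy=(\omega_1\bowtie\omega_2)(y)\,x$ for all $x,y\in A_1\bowtie A_2$.
   Context: A baric algebra over a field $K$ is a pair $(A,\omega)$ where $A$ is a (not necessarily associative) $K$-algebra and $\omega:A\to K$ is a nonzero $K$-algebra homomorphism. For baric algebras $(A_1,\omega_1),(A_2,\omega_2)$, $A_1\bowtie A_2$ denotes the vector space $A_1\oplus A_2$ with product $(a_1,a_2)(b_1,b_2)=(a_1b_1+\omega_2(b_2)a_1,\ a_2b_2+\omega_1(b_1)a_2)$, and $\omega_1\bowtie\omega_2(a_1,a_2)=\omega_1(a_1)+\omega_2(a_2)$. *)

theory Defs
  imports Complex_Main
begin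

definition nonassoc_algebra ::
  "('k::field \<Rightarrow> 'a::ab_group_add \<Rightarrow> 'a) \<Rightarrow> ('a \<Rightarrow> 'a \<Rightarrow> 'a) \<Rightarrow> bool" where
  "nonassoc_algebra sc m \<longleftrightarrow>
     vector_space sc \<and>
     (\<forall>x y z. m (x + y) z = m x z + m y z) \<and>
     (\<forall>x y z. m x (y + z) = m x y + m x z) \<and>
     (\<forall>c x y. m (sc c x) y = sc c (m x y)) \<and>
     (\<forall>c x y. m x (sc c y) = sc c (m x y))"

definition baric_algebra ::
  "('k::field \<Rightarrow> 'a::ab_group_add \<Rightarrow> 'a) \<Rightarrow> ('a \<Rightarrow> 'a \<Rightarrow> 'a) \<Rightarrow> ('a \<Rightarrow> 'k) \<Rightarrow> bool" where
  "baric_algebra sc m \<omega> \<longleftrightarrow>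
     nonassoc_algebra sc m \<and>
     (\<forall>x y. \<omega> (x + y) = \<omega> x + \<omega> y) \<and>
     (\<forall>c x. \<omega> (sc c x) = c * \<omega> x) \<and>
     (\<forall>x y. \<omega> (m x y) = \<omega> x * \<omega> y) \<and>
     (\<exists>x. \<omega> x \<noteq> 0)"

definition bowtie_scale ::
  "('k \<Rightarrow> 'a \<Rightarrow> 'a) \<Rightarrow> ('k \<Rightarrow> 'b \<Rightarrow> 'b) \<Rightarrow> 'k \<Rightarrow> 'a \<times> 'b \<Rightarrow> 'a \<times> 'b" where
  "bowtie_scale sc1 sc2 c p = (sc1 c (fst p), sc2 c (snd p))"

definition bowtie_mult ::
  "('k \<Rightarrow> 'a::plus \<Rightarrow> 'a) \<Rightarrow> ('a \<Rightarrow> 'a \<Rightarrow> 'a) \<Rightarrow> ('a \<Rightarrow> 'k) \<Rightarrow>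
   ('k \<Rightarrow> 'b::plus \<Rightarrow> 'b) \<Rightarrow> ('b \<Rightarrow> 'b \<Rightarrow> 'b) \<Rightarrow> ('b \<Rightarrow> 'k) \<Rightarrow>
   'a \<times> 'b \<Rightarrow> 'a \<times> 'b \<Rightarrow> 'a \<times> 'b" where
  "bowtie_mult sc1 m1 \<omega>1 sc2 m2 \<omega>2 p q =
     (m1 (fst p) (fst q) + sc1 (\<omega>2 (snd q)) (fst p),
      m2 (snd p) (snd q) + sc2 (\<omega>1 (fst q)) (snd p))"

definition bowtie_omega ::
  "('a \<Rightarrow> 'k::plus) \<Rightarrow> ('b \<Rightarrow> 'k) \<Rightarrow> 'a \<times> 'b \<Rightarrow> 'k" where
  "bowtie_omega \<omega>1 \<omega>2 p = \<omega>1 (fst p) + \<omega>2 (snd p)"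

definition associative_mult :: "('a \<Rightarrow> 'a \<Rightarrow> 'a) \<Rightarrow> bool" where
  "associative_mult m \<longleftrightarrow> (\<forall>x y z. m (m x y) z = m x (m y z))"

end

theory Submission
  imports Defs
begin

text \<open>
  Write M for the product of A1 \<bowtie> A2 and W for its weight.
  (\<Leftarrow>) A product of the form x y = W(y) x is associative as soon as W is
  homogeneous, since both (x y) z and x (y z) equal W(y) W(z) x; this is
  the general lemma weight_scaled_mult_associative.
  (\<Rightarrow>) Choose u in A2 of weight 1.  Evaluating associativity on the triple
  (a,0), (0,u), (c,0) gives m1 a c = \<omega>1(c) a, i.e. the product of A1 is
  "weight times identity"; swapping the two factors of \<bowtie> transports
  associativity and yields the same statement for A2.  Substituting both
  identities into the definition of M gives M x y = W(y) x.
\<close>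

lemma nonassoc_algebra_mult_zero:
  assumes "nonassoc_algebra sc m"
  shows "m x 0 = 0" and "m 0 x = 0"
proof -
  have "m x (0 + 0) = m x 0 + m x 0" and "m (0 + 0) x = m 0 x + m 0 x"
    using assms unfolding nonassoc_algebra_def by blast+
  then show "m x 0 = 0" and "m 0 x = 0" by simp_all
qed

lemma baric_algebra_weight_scale:
  assumes "baric_algebra sc m \<omega>"
  shows "\<omega> (sc c x) = c * \<omega> x"
  using assms unfolding baric_algebra_def by blast

lemma baric_algebra_vector_space:
  assumes "baric_algebra sc m \<omega>"
  shows "vector_space sc"
  using assms unfolding baric_algebra_def nonassoc_algebra_def by blast

lemma baric_algebra_mult_zero:
  assumes "baric_algebra sc m \<omega>"
  shows "m x 0 = 0" and "m 0 x = 0"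
  using assms nonassoc_algebra_mult_zero unfolding baric_algebra_def by blast+

lemma baric_algebra_weight_zero:
  assumes "baric_algebra sc m \<omega>"
  shows "\<omega> 0 = 0"
proof -
  interpret vector_space sc using assms by (rule baric_algebra_vector_space)
  have "\<omega> (sc 0 0) = 0 * \<omega> 0" using assms by (rule baric_algebra_weight_scale)
  then show ?thesis by simp
qed

text \<open>Since the weight is nonzero and homogeneous, some element has weight 1;
  this is the test element used to detect the product of the other factor.\<close>
lemma baric_algebra_weight_one:
  assumes "baric_algebra sc m \<omega>"
  obtains u where "\<omega> u = 1"
proof -
  obtain x where "\<omega> x \<noteq> 0" using assms unfolding baric_algebra_def by blast
  then have "\<omega> (sc (inverse (\<omega> x)) x) = 1"
    using assms by (simp add: baric_algebra_weight_scale)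
  then show ?thesis by (rule that)
qed

lemma bowtie_mult_swap:
  "bowtie_mult sc2 m2 \<omega>2 sc1 m1 \<omega>1 (prod.swap p) (prod.swap q)
     = prod.swap (bowtie_mult sc1 m1 \<omega>1 sc2 m2 \<omega>2 p q)"
  by (simp add: bowtie_mult_def)

lemma associative_mult_bowtie_swap:
  assumes "associative_mult (bowtie_mult sc1 m1 \<omega>1 sc2 m2 \<omega>2)"
  shows "associative_mult (bowtie_mult sc2 m2 \<omega>2 sc1 m1 \<omega>1)"
  unfolding associative_mult_def
proof (intro allI)
  fix x y z
  let ?M = "bowtie_mult sc1 m1 \<omega>1 sc2 m2 \<omega>2"
  have "?M (?M (prod.swap x) (prod.swap y)) (prod.swap z)
      = ?M (prod.swap x) (?M (prod.swap y) (prod.swap z))"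
    using assms unfolding associative_mult_def by blast
  then show "bowtie_mult sc2 m2 \<omega>2 sc1 m1 \<omega>1 (bowtie_mult sc2 m2 \<omega>2 sc1 m1 \<omega>1 x y) z
           = bowtie_mult sc2 m2 \<omega>2 sc1 m1 \<omega>1 x (bowtie_mult sc2 m2 \<omega>2 sc1 m1 \<omega>1 y z)"
    by (metis bowtie_mult_swap swap_swap)
qed

text \<open>With u of weight 1 in A2, ((a,0)(0,u))(c,0) = (m1 a c, _) while
  (a,0)((0,u)(c,0)) = (a,0)(0, \<omega>1(c) u) = (\<omega>1(c) a, _).\<close>
lemma bowtie_associative_first_factor:
  assumes A1: "baric_algebra sc1 m1 \<omega>1" and A2: "baric_algebra sc2 m2 \<omega>2"
    and assoc: "associative_mult (bowtie_mult sc1 m1 \<omega>1 sc2 m2 \<omega>2)"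
  shows "m1 a c = sc1 (\<omega>1 c) a"
proof -
  interpret v1: vector_space sc1 using A1 by (rule baric_algebra_vector_space)
  interpret v2: vector_space sc2 using A2 by (rule baric_algebra_vector_space)
  obtain u where u: "\<omega>2 u = 1" using A2 by (rule baric_algebra_weight_one)
  let ?M = "bowtie_mult sc1 m1 \<omega>1 sc2 m2 \<omega>2"
  note simps = bowtie_mult_def baric_algebra_mult_zero[OF A1] baric_algebra_mult_zero[OF A2]
    baric_algebra_weight_zero[OF A1] baric_algebra_weight_zero[OF A2]
    baric_algebra_weight_scale[OF A2] u
  have left: "?M (?M (a, 0) (0, u)) (c, 0) = (m1 a c, 0)"
    by (simp add: simps)
  have right: "?M (a, 0) (?M (0, u) (c, 0)) = (sc1 (\<omega>1 c) a, 0)"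
    by (simp add: simps)
  show ?thesis
    using assoc left right unfolding associative_mult_def by (metis prod.inject)
qed

text \<open>The same for A2, by the swap symmetry.\<close>
lemma bowtie_associative_second_factor:
  assumes "baric_algebra sc1 m1 \<omega>1" and "baric_algebra sc2 m2 \<omega>2"
    and "associative_mult (bowtie_mult sc1 m1 \<omega>1 sc2 m2 \<omega>2)"
  shows "m2 a c = sc2 (\<omega>2 c) a"
  using assms by (blast intro: bowtie_associative_first_factor associative_mult_bowtie_swap)

lemma bowtie_associative_weight_product:
  assumes A1: "baric_algebra sc1 m1 \<omega>1" and A2: "baric_algebra sc2 m2 \<omega>2"
    and assoc: "associative_mult (bowtie_mult sc1 m1 \<omega>1 sc2 m2 \<omega>2)"
  shows "bowtie_mult sc1 m1 \<omega>1 sc2 m2 \<omega>2 x y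
           = bowtie_scale sc1 sc2 (bowtie_omega \<omega>1 \<omega>2 y) x"
proof -
  interpret v1: vector_space sc1 using A1 by (rule baric_algebra_vector_space)
  interpret v2: vector_space sc2 using A2 by (rule baric_algebra_vector_space)
  show ?thesis
    by (simp add: bowtie_mult_def bowtie_scale_def bowtie_omega_def
        bowtie_associative_first_factor[OF assms] bowtie_associative_second_factor[OF assms]
        v1.scale_left_distrib v2.scale_left_distrib add.commute)
qed

text \<open>Stated for any scalar action compatible with multiplication of scalars
  and any homogeneous weight: both bracketings give W(y) W(z) x.\<close>
lemma weight_scaled_mult_associative:
  fixes sc :: "'k::comm_semiring_1 \<Rightarrow> 'a \<Rightarrow> 'a" and W :: "'a \<Rightarrow> 'k"
  assumes scale_scale: "\<And>c d x. sc c (sc d x) = sc (c * d) x"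
    and homogeneous: "\<And>c x. W (sc c x) = c * W x"
  shows "associative_mult (\<lambda>x y. sc (W y) x)"
  unfolding associative_mult_def
  by (simp add: scale_scale homogeneous mult.commute)

lemma bowtie_omega_scale:
  assumes "baric_algebra sc1 m1 \<omega>1" and "baric_algebra sc2 m2 \<omega>2"
  shows "bowtie_omega \<omega>1 \<omega>2 (bowtie_scale sc1 sc2 c x) = c * bowtie_omega \<omega>1 \<omega>2 x"
  using baric_algebra_weight_scale[OF assms(1)] baric_algebra_weight_scale[OF assms(2)]
  by (simp add: bowtie_omega_def bowtie_scale_def distrib_left)

lemma bowtie_scale_scale:
  assumes "vector_space sc1" and "vector_space sc2"
  shows "bowtie_scale sc1 sc2 c (bowtie_scale sc1 sc2 d x) = bowtie_scale sc1 sc2 (c * d) x"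
proof -
  interpret v1: vector_space sc1 by fact
  interpret v2: vector_space sc2 by fact
  show ?thesis by (simp add: bowtie_scale_def)
qed

theorem proposition6p1:
  fixes sc1 :: "'k::field \<Rightarrow> 'a::ab_group_add \<Rightarrow> 'a" and m1 :: "'a \<Rightarrow> 'a \<Rightarrow> 'a"
    and \<omega>1 :: "'a \<Rightarrow> 'k"
    and sc2 :: "'k \<Rightarrow> 'b::ab_group_add \<Rightarrow> 'b" and m2 :: "'b \<Rightarrow> 'b \<Rightarrow> 'b"
    and \<omega>2 :: "'b \<Rightarrow> 'k"
  assumes "baric_algebra sc1 m1 \<omega>1" and "baric_algebra sc2 m2 \<omega>2"
  shows "associative_mult (bowtie_mult sc1 m1 \<omega>1 sc2 m2 \<omega>2) \<longleftrightarrow>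
    (\<forall>x y. bowtie_mult sc1 m1 \<omega>1 sc2 m2 \<omega>2 x y
           = bowtie_scale sc1 sc2 (bowtie_omega \<omega>1 \<omega>2 y) x)"
proof
  assume "associative_mult (bowtie_mult sc1 m1 \<omega>1 sc2 m2 \<omega>2)"
  then show "\<forall>x y. bowtie_mult sc1 m1 \<omega>1 sc2 m2 \<omega>2 x y
                   = bowtie_scale sc1 sc2 (bowtie_omega \<omega>1 \<omega>2 y) x"
    using assms bowtie_associative_weight_product by blast
next
  assume "\<forall>x y. bowtie_mult sc1 m1 \<omega>1 sc2 m2 \<omega>2 x y
               = bowtie_scale sc1 sc2 (bowtie_omega \<omega>1 \<omega>2 y) x"
  then have product: "bowtie_mult sc1 m1 \<omega>1 sc2 m2 \<omega>2
      = (\<lambda>x y. bowtie_scale sc1 sc2 (bowtie_omega \<omega>1 \<omega>2 y) x)"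
    by blast
  have "associative_mult (\<lambda>x y. bowtie_scale sc1 sc2 (bowtie_omega \<omega>1 \<omega>2 y) x)"
    using bowtie_scale_scale[OF assms[THEN baric_algebra_vector_space]]
      bowtie_omega_scale[OF assms]
    by (rule weight_scaled_mult_associative)
  then show "associative_mult (bowtie_mult sc1 m1 \<omega>1 sc2 m2 \<omega>2)"
    by (simp only: product)
qed

end
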